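(* Let $G$ be a connected graph with a vertex $u$. Let $v\in N(u)$ with $d(v)\le d(u)-2$, and let $w\in V(G)\setminus N[u]$ be a neighbor of $v$. If $|N(v)\setminus N[u]|\in\{1,2\}$ and $N(z)\setminus \{v\}\subseteq N(v)\setminus N(u)$ for every $z\in N(v)\setminus N[u]$, then $q(G-vw+uw)>q(G)$.
   Context: $N(x)$ is the neighborhood of $x$, $N[x]=N(x)\cup\{x\}$, $d(x)=|N(x)|$. $Q(G)=D(G)+A(G)$ is the signless Laplacian and $q(G)$ its largest eigenvalue. $G-vw+uw$ denotes the graph obtained by deleting edge $vw$ and adding edge $uw$. *)

theory Defs
  imports Complex_Main
begin

definition simple_graph :: "'a set \<Rightarrow> 'a set set \<Rightarrow> bool" where
  "simple_graph V E \<longleftrightarrow> finite V \<and> (\<forall>e\<in>E. \<exists>x y. x \<in> V \<and> y \<in> V \<and> x \<noteq> y \<and> e = {x, y})"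

definition nbhd :: "'a set set \<Rightarrow> 'a \<Rightarrow> 'a set" where
  "nbhd E x = {y. {x, y} \<in> E}"

definition cnbhd :: "'a set set \<Rightarrow> 'a \<Rightarrow> 'a set" where
  "cnbhd E x = insert x (nbhd E x)"

definition deg :: "'a set set \<Rightarrow> 'a \<Rightarrow> nat" where
  "deg E x = card (nbhd E x)"

definition connected_graph :: "'a set \<Rightarrow> 'a set set \<Rightarrow> bool" where
  "connected_graph V E \<longleftrightarrow> V \<noteq> {} \<and>
     (\<forall>x\<in>V. \<forall>y\<in>V. (\<lambda>a b. {a, b} \<in> E)\<^sup>*\<^sup>* x y)"

definition signless_laplacian :: "'a set set \<Rightarrow> 'a \<Rightarrow> 'a \<Rightarrow> real" where
  "signless_laplacian E x y =
     (if x = y then real (deg E x) else 0) + (if {x, y} \<in> E then 1 else 0)"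

definition is_eigenvalue :: "'a set \<Rightarrow> ('a \<Rightarrow> 'a \<Rightarrow> real) \<Rightarrow> real \<Rightarrow> bool" where
  "is_eigenvalue V M mu \<longleftrightarrow> (\<exists>f :: 'a \<Rightarrow> real. (\<exists>x\<in>V. f x \<noteq> 0) \<and>
      (\<forall>x\<in>V. (\<Sum>y\<in>V. M x y * f y) = mu * f x))"

definition q_index :: "'a set \<Rightarrow> 'a set set \<Rightarrow> real" where
  "q_index V E = Max {mu. is_eigenvalue V (signless_laplacian E) mu}"

end

theory Submission
  imports Defs "HOL-Analysis.Analysis" "HOL-Library.Function_Algebras"
begin

(* Let x be a unit Perron vector of Q(G): by the Rayleigh principle it can be taken
   nonnegative, and by connectivity it is positive.  As x^T Q(G) x is the sum of
   (x_a + x_b)^2 over the edges ab, moving the edge vw to uw changes it by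
   (x_u + x_w)^2 - (x_v + x_w)^2, so q(G - vw + uw) > q(G) as soon as x_u > x_v.
   Let S be the sum of x over A = N(v) - N[u].  Each z in A has all its neighbours in
   A or equal to v, so d(z) <= |A| <= 2 and q x_z <= x_z + x_v + S; summing over A gives
   q S <= 3 S + 2 x_v, hence S < 2 x_v because q > d(u) >= d(v) + 2 >= 4.  Subtracting
   the eigenvalue equations at u and v then yields (q - d(u) + 1) (x_u - x_v) > 0. *)

section \<open>Quadratic forms and the Rayleigh principle\<close>

definition inner_on :: "'a set \<Rightarrow> ('a \<Rightarrow> real) \<Rightarrow> ('a \<Rightarrow> real) \<Rightarrow> real" where
  "inner_on V f g = (\<Sum>x\<in>V. f x * g x)"

definition mat_apply :: "'a set \<Rightarrow> ('a \<Rightarrow> 'a \<Rightarrow> real) \<Rightarrow> ('a \<Rightarrow> real) \<Rightarrow> 'a \<Rightarrow> real" where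
  "mat_apply V M f x = (\<Sum>y\<in>V. M x y * f y)"

definition quad_form :: "'a set \<Rightarrow> ('a \<Rightarrow> 'a \<Rightarrow> real) \<Rightarrow> ('a \<Rightarrow> real) \<Rightarrow> real" where
  "quad_form V M f = inner_on V f (mat_apply V M f)"

definition symmetric_on :: "'a set \<Rightarrow> ('a \<Rightarrow> 'a \<Rightarrow> real) \<Rightarrow> bool" where
  "symmetric_on V M \<longleftrightarrow> (\<forall>x\<in>V. \<forall>y\<in>V. M x y = M y x)"

lemma is_eigenvalue_iff:
  "is_eigenvalue V M mu \<longleftrightarrow> (\<exists>f. (\<exists>x\<in>V. f x \<noteq> 0) \<and> (\<forall>x\<in>V. mat_apply V M f x = mu * f x))"
  unfolding is_eigenvalue_def mat_apply_def ..

lemma inner_on_commute: "inner_on V f g = inner_on V g f"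
  unfolding inner_on_def by (simp add: mult.commute)

lemma inner_on_cong: "(\<And>x. x \<in> V \<Longrightarrow> g x = h x) \<Longrightarrow> inner_on V f g = inner_on V f h"
  unfolding inner_on_def by simp

lemma inner_on_add_right: "inner_on V f (\<lambda>x. g x + h x) = inner_on V f g + inner_on V f h"
  unfolding inner_on_def by (simp add: distrib_left sum.distrib)

lemma inner_on_scale_right: "inner_on V f (\<lambda>x. c * g x) = c * inner_on V f g"
  unfolding inner_on_def by (simp add: sum_distrib_left mult_ac)

lemma inner_on_add_left: "inner_on V (\<lambda>x. g x + h x) f = inner_on V g f + inner_on V h f"
  by (simp add: inner_on_commute[of V _ f] inner_on_add_right)

lemma inner_on_scale_left: "inner_on V (\<lambda>x. c * g x) f = c * inner_on V g f"
  by (simp add: inner_on_commute[of V _ f] inner_on_scale_right)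

lemma inner_on_self_nonneg: "0 \<le> inner_on V f f"
  unfolding inner_on_def by (intro sum_nonneg) simp

lemma inner_on_self_eq_0_iff:
  assumes "finite V"
  shows "inner_on V f f = 0 \<longleftrightarrow> (\<forall>x\<in>V. f x = 0)"
  using sum_nonneg_eq_0_iff[OF assms, of "\<lambda>x. f x * f x"] unfolding inner_on_def by simp

lemma inner_on_self_pos_iff:
  assumes "finite V"
  shows "0 < inner_on V f f \<longleftrightarrow> (\<exists>x\<in>V. f x \<noteq> 0)"
  using inner_on_self_eq_0_iff[OF assms, of f] inner_on_self_nonneg[of V f] by auto

lemma mat_apply_add: "mat_apply V M (\<lambda>x. f x + g x) = (\<lambda>x. mat_apply V M f x + mat_apply V M g x)"
  unfolding mat_apply_def by (simp add: distrib_left sum.distrib)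

lemma mat_apply_scale: "mat_apply V M (\<lambda>x. c * f x) = (\<lambda>x. c * mat_apply V M f x)"
  unfolding mat_apply_def by (simp add: sum_distrib_left mult_ac)

lemma inner_on_mat_apply_commute:
  assumes "symmetric_on V M"
  shows "inner_on V f (mat_apply V M g) = inner_on V g (mat_apply V M f)"
proof -
  have "inner_on V f (mat_apply V M g) = (\<Sum>x\<in>V. \<Sum>y\<in>V. M x y * f x * g y)"
    unfolding inner_on_def mat_apply_def by (simp add: sum_distrib_left mult_ac)
  also have "\<dots> = (\<Sum>y\<in>V. \<Sum>x\<in>V. M y x * g y * f x)"
    using assms unfolding symmetric_on_def by (subst sum.swap) (simp add: mult_ac)
  also have "\<dots> = inner_on V g (mat_apply V M f)"
    unfolding inner_on_def mat_apply_def by (simp add: sum_distrib_left mult_ac)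
  finally show ?thesis .
qed

lemma quad_form_add_scaled:
  assumes "symmetric_on V M"
  shows "quad_form V M (\<lambda>x. f x + t * g x)
    = quad_form V M f + 2 * t * inner_on V g (mat_apply V M f) + t\<^sup>2 * quad_form V M g"
  using inner_on_mat_apply_commute[OF assms, of f g]
  by (simp add: quad_form_def mat_apply_add mat_apply_scale inner_on_add_left inner_on_add_right
      inner_on_scale_left inner_on_scale_right algebra_simps power2_eq_square)

lemma inner_on_add_scaled:
  "inner_on V (\<lambda>x. f x + t * g x) (\<lambda>x. f x + t * g x)
    = inner_on V f f + 2 * t * inner_on V g f + t\<^sup>2 * inner_on V g g"
  using inner_on_commute[of V f g]
  by (simp add: inner_on_add_left inner_on_add_right inner_on_scale_left inner_on_scale_right
      algebra_simps power2_eq_square)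

lemma quad_form_scale: "quad_form V M (\<lambda>x. c * f x) = c\<^sup>2 * quad_form V M f"
  by (simp add: quad_form_def mat_apply_scale inner_on_scale_left inner_on_scale_right power2_eq_square)

lemma inner_on_self_scale: "inner_on V (\<lambda>x. c * f x) (\<lambda>x. c * f x) = c\<^sup>2 * inner_on V f f"
  by (simp add: inner_on_scale_left inner_on_scale_right power2_eq_square)

lemma abs_le_1_if_inner_on_self_eq_1:
  assumes "finite V" and "inner_on V g g = 1" and "x \<in> V"
  shows "\<bar>g x\<bar> \<le> 1"
proof -
  have "g x * g x \<le> inner_on V g g"
    unfolding inner_on_def by (rule member_le_sum[OF assms(3) _ assms(1)]) auto
  thus ?thesis
    using assms(2) by (metis abs_square_le_1 power2_eq_square)
qed

lemma quad_form_attains_max_on_sphere: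
  assumes fin: "finite V" and ne: "V \<noteq> {}"
  obtains f where "inner_on V f f = 1"
    and "\<And>g. inner_on V g g = 1 \<Longrightarrow> quad_form V M g \<le> quad_form V M f"
proof -
  define B where "B = PiE UNIV (\<lambda>i. if i \<in> V then {-1..1} else {0::real})"
  define K where "K = B \<inter> {f. inner_on V f f = 1}"
  have "compactin (product_topology (\<lambda>i. euclidean) UNIV) B"
    unfolding B_def by (subst compactin_PiE) auto
  hence "compact B"
    by (simp add: euclidean_product_topology)
  moreover have "closed {f::'a \<Rightarrow> real. inner_on V f f = 1}"
    unfolding inner_on_def by (intro closed_Collect_eq continuous_intros) auto
  ultimately have "compact K"
    unfolding K_def by blast
  obtain a where a: "a \<in> V"
    using ne by blast
  have "(\<lambda>i. if i = a then 1 else 0) \<in> K"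
    unfolding K_def B_def inner_on_def using a fin by (auto simp: if_distrib cong: if_cong)
  hence "K \<noteq> {}"
    by blast
  moreover have "continuous_on K (quad_form V M)"
    unfolding quad_form_def inner_on_def mat_apply_def
    by (intro continuous_intros continuous_on_subset[OF continuous_on_product_coordinates]) auto
  ultimately obtain f where f: "f \<in> K" "\<And>g. g \<in> K \<Longrightarrow> quad_form V M g \<le> quad_form V M f"
    using continuous_attains_sup[OF \<open>compact K\<close>] by blast
  show thesis
  proof
    show "inner_on V f f = 1"
      using f(1) unfolding K_def by simp
    fix g assume g: "inner_on V g g = 1"
    define g' where "g' i = (if i \<in> V then g i else 0)" for i
    have "inner_on V g' g' = inner_on V g g" "quad_form V M g' = quad_form V M g"
      unfolding quad_form_def inner_on_def mat_apply_def g'_def by (auto intro!: sum.cong)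
    hence "g' \<in> K"
      unfolding K_def B_def using g abs_le_1_if_inner_on_self_eq_1[OF fin g]
      by (auto simp: g'_def abs_le_iff)
    thus "quad_form V M g \<le> quad_form V M f"
      using f(2) \<open>quad_form V M g' = quad_form V M g\<close> by metis
  qed
qed

lemma quad_form_le_of_sphere_bound:
  assumes "finite V" and bound: "\<And>g. inner_on V g g = 1 \<Longrightarrow> quad_form V M g \<le> l"
  shows "quad_form V M f \<le> l * inner_on V f f"
proof (cases "inner_on V f f = 0")
  case True
  hence "\<forall>x\<in>V. f x = 0"
    using inner_on_self_eq_0_iff[OF assms(1)] by blast
  then show ?thesis
    by (simp add: quad_form_def inner_on_def)
next
  case False
  hence pos: "0 < inner_on V f f"
    using inner_on_self_nonneg[of V f] by simp
  define c where "c = 1 / sqrt (inner_on V f f)"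
  have c2: "c\<^sup>2 = 1 / inner_on V f f"
    unfolding c_def using pos by (simp add: power_divide)
  have "c\<^sup>2 * quad_form V M f \<le> l"
    using bound[of "\<lambda>x. c * f x"] pos by (simp add: quad_form_scale inner_on_self_scale c2)
  thus ?thesis
    using pos by (simp add: c2 field_simps)
qed

lemma nonpos_if_linear_quadratic_nonpos:
  fixes a b :: real
  assumes "\<And>t. 0 < t \<Longrightarrow> a * t + b * t\<^sup>2 \<le> 0"
  shows "a \<le> 0"
proof (rule ccontr)
  assume "\<not> a \<le> 0"
  define t where "t = a / (2 * (\<bar>b\<bar> + 1))"
  have t: "0 < t" "\<bar>b\<bar> * t \<le> a / 2"
    using \<open>\<not> a \<le> 0\<close> by (auto simp: t_def field_simps)
  have "t * (a + b * t) \<le> 0"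
    using assms[OF t(1)] by (simp add: algebra_simps power2_eq_square)
  moreover have "- (b * t) \<le> \<bar>b\<bar> * t"
    using t(1) abs_ge_minus_self[of "b * t"] by (simp add: abs_mult)
  hence "0 < a + b * t"
    using t(2) \<open>\<not> a \<le> 0\<close> by linarith
  ultimately show False
    using t(1) by (simp add: mult_le_0_iff)
qed

lemma Rayleigh_maximizer_is_eigenvector:
  assumes fin: "finite V" and sym: "symmetric_on V M"
    and bound: "\<And>g. quad_form V M g \<le> l * inner_on V g g"
    and max: "quad_form V M f = l * inner_on V f f"
    and "x \<in> V"
  shows "mat_apply V M f x = l * f x"
proof -
  define r where "r y = mat_apply V M f y - l * f y" for y
  have r: "inner_on V r (mat_apply V M f) - l * inner_on V r f = inner_on V r r"
    unfolding inner_on_def r_def by (simp add: sum_distrib_left sum_subtractf[symmetric] algebra_simps)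
  have "2 * inner_on V r r * t + (quad_form V M r - l * inner_on V r r) * t\<^sup>2 \<le> 0" for t
  proof -
    have "quad_form V M (\<lambda>y. f y + t * r y)
        \<le> l * inner_on V (\<lambda>y. f y + t * r y) (\<lambda>y. f y + t * r y)"
      by (rule bound)
    hence "2 * t * (inner_on V r (mat_apply V M f) - l * inner_on V r f)
        + t\<^sup>2 * (quad_form V M r - l * inner_on V r r) \<le> 0"
      unfolding quad_form_add_scaled[OF sym] inner_on_add_scaled max by (simp add: algebra_simps)
    thus ?thesis
      unfolding r by (simp add: mult_ac)
  qed
  hence "2 * inner_on V r r \<le> 0"
    by (rule nonpos_if_linear_quadratic_nonpos)
  hence "inner_on V r r = 0"
    using inner_on_self_nonneg[of V r] by simp
  thus ?thesis
    using \<open>x \<in> V\<close> inner_on_self_eq_0_iff[OF fin] by (simp add: r_def)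
qed

lemma eigenvalue_le_Rayleigh_bound:
  assumes fin: "finite V" and bound: "\<And>g. quad_form V M g \<le> l * inner_on V g g"
    and "is_eigenvalue V M mu"
  shows "mu \<le> l"
proof -
  obtain f where nz: "\<exists>x\<in>V. f x \<noteq> 0" and eig: "\<forall>x\<in>V. mat_apply V M f x = mu * f x"
    using assms(3) unfolding is_eigenvalue_iff by blast
  have "quad_form V M f = inner_on V f (\<lambda>x. mu * f x)"
    unfolding quad_form_def using eig by (intro inner_on_cong) simp
  hence "mu * inner_on V f f \<le> l * inner_on V f f"
    using bound[of f] by (simp add: inner_on_scale_right)
  thus ?thesis
    using nz inner_on_self_pos_iff[OF fin] by simp
qed

lemma eigenvectors_orthogonal:
  assumes sym: "symmetric_on V M"
    and f: "\<forall>x\<in>V. mat_apply V M f x = mu * f x"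
    and g: "\<forall>x\<in>V. mat_apply V M g x = nu * g x"
    and "mu \<noteq> nu"
  shows "inner_on V f g = 0"
proof -
  have "mu * inner_on V f g = inner_on V g (\<lambda>x. mu * f x)"
    by (simp add: inner_on_scale_right inner_on_commute)
  also have "\<dots> = inner_on V g (mat_apply V M f)"
    using f by (intro inner_on_cong) simp
  also have "\<dots> = inner_on V f (mat_apply V M g)"
    by (rule inner_on_mat_apply_commute[OF sym, symmetric])
  also have "\<dots> = inner_on V f (\<lambda>x. nu * g x)"
    using g by (intro inner_on_cong) simp
  also have "\<dots> = nu * inner_on V f g"
    by (rule inner_on_scale_right)
  finally show ?thesis
    using \<open>mu \<noteq> nu\<close> by simp
qed

interpretation fun_vector_space: vector_space "\<lambda>(c::real) (f::'a \<Rightarrow> real) x. c * f x"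
  by unfold_locales (auto simp: fun_eq_iff algebra_simps)

lemma sum_fun_apply: "(\<Sum>i\<in>S. F i) x = (\<Sum>i\<in>S. F i x :: real)"
  by (induction S rule: infinite_finite_induct) auto

lemma orthogonal_family_finite:
  assumes fin: "finite V"
    and supp: "\<And>\<phi> x. \<phi> \<in> \<Phi> \<Longrightarrow> x \<notin> V \<Longrightarrow> \<phi> x = 0"
    and nz: "\<And>\<phi>. \<phi> \<in> \<Phi> \<Longrightarrow> inner_on V \<phi> \<phi> \<noteq> 0"
    and orth: "\<And>\<phi> \<psi>. \<phi> \<in> \<Phi> \<Longrightarrow> \<psi> \<in> \<Phi> \<Longrightarrow> \<phi> \<noteq> \<psi> \<Longrightarrow> inner_on V \<phi> \<psi> = 0"
  shows "finite \<Phi>"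
proof -
  define \<delta> where "\<delta> a = (\<lambda>x. if x = a then 1 else 0 :: real)" for a :: 'a
  have "\<Phi> \<subseteq> fun_vector_space.span (\<delta> ` V)"
  proof
    fix \<phi> assume "\<phi> \<in> \<Phi>"
    hence "\<phi> = (\<Sum>a\<in>V. (\<lambda>x. \<phi> a * \<delta> a x))"
      using supp fin by (auto simp: fun_eq_iff sum_fun_apply \<delta>_def if_distrib cong: if_cong)
    also have "\<dots> \<in> fun_vector_space.span (\<delta> ` V)"
      by (intro fun_vector_space.span_sum fun_vector_space.span_scale fun_vector_space.span_base)
        auto
    finally show "\<phi> \<in> fun_vector_space.span (\<delta> ` V)" .
  qed
  moreover have "fun_vector_space.independent \<Phi>"
    unfolding fun_vector_space.independent_explicit_finite_subsets
  proof (intro allI impI ballI)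
    fix S c \<phi>
    assume S: "S \<subseteq> \<Phi>" "finite S" and "(\<Sum>\<psi>\<in>S. (\<lambda>x. c \<psi> * \<psi> x)) = 0" and "\<phi> \<in> S"
    hence "0 = inner_on V \<phi> (\<Sum>\<psi>\<in>S. (\<lambda>x. c \<psi> * \<psi> x))"
      by (simp add: inner_on_def)
    also have "\<dots> = (\<Sum>\<psi>\<in>S. c \<psi> * inner_on V \<phi> \<psi>)"
      unfolding inner_on_def sum_fun_apply sum_distrib_left
      by (subst sum.swap) (simp add: mult_ac)
    also have "\<dots> = c \<phi> * inner_on V \<phi> \<phi> + (\<Sum>\<psi>\<in>S - {\<phi>}. c \<psi> * inner_on V \<phi> \<psi>)"
      by (rule sum.remove[OF S(2) \<open>\<phi> \<in> S\<close>])
    also have "(\<Sum>\<psi>\<in>S - {\<phi>}. c \<psi> * inner_on V \<phi> \<psi>) = 0"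
      using S \<open>\<phi> \<in> S\<close> orth by (intro sum.neutral ballI) (metis DiffE singletonI subsetD mult_zero_right)
    finally show "c \<phi> = 0"
      using nz S \<open>\<phi> \<in> S\<close> by auto
  qed
  ultimately show ?thesis
    using fun_vector_space.independent_span_bound[of "\<delta> ` V"] fin by blast
qed

(* Needed because Max of an infinite set is unspecified. *)
lemma finite_eigenvalues:
  assumes fin: "finite V" and sym: "symmetric_on V M"
  shows "finite {mu. is_eigenvalue V M mu}"
proof -
  define Eig where "Eig = {mu. is_eigenvalue V M mu}"
  define is_vec where "is_vec mu f \<longleftrightarrow> (\<exists>x\<in>V. f x \<noteq> 0) \<and>
      (\<forall>x\<in>V. mat_apply V M f x = mu * f x) \<and> (\<forall>x. x \<notin> V \<longrightarrow> f x = 0)" for mu f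
  have "\<forall>mu\<in>Eig. \<exists>f. is_vec mu f"
  proof
    fix mu assume "mu \<in> Eig"
    then obtain f where "\<exists>x\<in>V. f x \<noteq> 0" "\<forall>x\<in>V. mat_apply V M f x = mu * f x"
      unfolding Eig_def is_eigenvalue_iff by blast
    moreover have "mat_apply V M (\<lambda>x. if x \<in> V then f x else 0) = mat_apply V M f"
      unfolding mat_apply_def by (auto intro!: sum.cong)
    ultimately show "\<exists>f. is_vec mu f"
      unfolding is_vec_def by (intro exI[of _ "\<lambda>x. if x \<in> V then f x else 0"]) auto
  qed
  then obtain vec where vec: "\<forall>mu\<in>Eig. is_vec mu (vec mu)"
    using bchoice by blast
  have nz: "inner_on V (vec mu) (vec mu) \<noteq> 0" if "mu \<in> Eig" for mu
    using vec that unfolding is_vec_def inner_on_self_eq_0_iff[OF fin] by blast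
  have orth: "inner_on V (vec mu) (vec nu) = 0" if "mu \<in> Eig" "nu \<in> Eig" "mu \<noteq> nu" for mu nu
    using vec that unfolding is_vec_def by (intro eigenvectors_orthogonal[OF sym]) auto
  have "inj_on vec Eig"
  proof (rule inj_onI, rule ccontr)
    fix mu nu assume "mu \<in> Eig" "nu \<in> Eig" "vec mu = vec nu" "mu \<noteq> nu"
    then show False
      using nz orth by metis
  qed
  moreover have "finite (vec ` Eig)"
  proof (rule orthogonal_family_finite[OF fin])
    show "\<phi> x = 0" if "\<phi> \<in> vec ` Eig" "x \<notin> V" for \<phi> x
      using that vec unfolding is_vec_def by blast
    show "inner_on V \<phi> \<phi> \<noteq> 0" if "\<phi> \<in> vec ` Eig" for \<phi>
      using that nz by blast
    show "inner_on V \<phi> \<psi> = 0" if "\<phi> \<in> vec ` Eig" "\<psi> \<in> vec ` Eig" "\<phi> \<noteq> \<psi>" for \<phi> \<psi>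
      using that orth by blast
  qed
  ultimately show ?thesis
    unfolding Eig_def by (blast dest: finite_imageD)
qed

lemma Max_eigenvalue_eqI:
  assumes fin: "finite V" and sym: "symmetric_on V M"
    and bound: "\<And>g. quad_form V M g \<le> l * inner_on V g g"
    and "\<exists>x\<in>V. f x \<noteq> 0" and "\<forall>x\<in>V. mat_apply V M f x = l * f x"
  shows "Max {mu. is_eigenvalue V M mu} = l"
  using assms by (intro Max_eqI finite_eigenvalues eigenvalue_le_Rayleigh_bound[OF fin bound])
    (auto simp: is_eigenvalue_iff)

lemma Rayleigh_principle:
  assumes fin: "finite V" and ne: "V \<noteq> {}" and sym: "symmetric_on V M"
  obtains f where "inner_on V f f = 1" and "quad_form V M f = Max {mu. is_eigenvalue V M mu}"
    and "\<And>g. quad_form V M g \<le> Max {mu. is_eigenvalue V M mu} * inner_on V g g"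
proof -
  obtain f where f: "inner_on V f f = 1"
    and max: "\<And>g. inner_on V g g = 1 \<Longrightarrow> quad_form V M g \<le> quad_form V M f"
    using quad_form_attains_max_on_sphere[OF fin ne, of M] by blast
  define l where "l = quad_form V M f"
  have bound: "quad_form V M g \<le> l * inner_on V g g" for g
    using quad_form_le_of_sphere_bound[OF fin] max unfolding l_def by blast
  have "quad_form V M f = l * inner_on V f f"
    using f l_def by simp
  hence "\<forall>x\<in>V. mat_apply V M f x = l * f x"
    using Rayleigh_maximizer_is_eigenvector[OF fin sym bound] by blast
  moreover have "\<exists>x\<in>V. f x \<noteq> 0"
    using f inner_on_self_pos_iff[OF fin, of f] by simp
  ultimately have "Max {mu. is_eigenvalue V M mu} = l"
    by (rule Max_eigenvalue_eqI[OF fin sym bound, rotated])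
  thus thesis
    using that f bound l_def by simp
qed

lemma Perron_eigenvector:
  assumes fin: "finite V" and ne: "V \<noteq> {}" and sym: "symmetric_on V M"
    and nonneg: "\<And>x y. x \<in> V \<Longrightarrow> y \<in> V \<Longrightarrow> 0 \<le> M x y"
  obtains f where "inner_on V f f = 1" and "\<And>x. x \<in> V \<Longrightarrow> 0 \<le> f x"
    and "\<And>x. x \<in> V \<Longrightarrow> mat_apply V M f x = Max {mu. is_eigenvalue V M mu} * f x"
proof -
  let ?l = "Max {mu. is_eigenvalue V M mu}"
  obtain f where f: "inner_on V f f = 1" "quad_form V M f = ?l"
    and bound: "\<And>g. quad_form V M g \<le> ?l * inner_on V g g"
    using Rayleigh_principle[OF fin ne sym] by blast
  define g where "g x = \<bar>f x\<bar>" for x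
  have g: "inner_on V g g = 1"
    using f(1) unfolding inner_on_def g_def by (simp add: abs_mult[symmetric])
  have "quad_form V M f \<le> quad_form V M g"
    unfolding quad_form_def inner_on_def mat_apply_def sum_distrib_left
  proof (intro sum_mono)
    fix x y assume "x \<in> V" "y \<in> V"
    have "M x y * (f x * f y) \<le> M x y * (g x * g y)"
      unfolding g_def abs_mult[symmetric] using nonneg[OF \<open>x \<in> V\<close> \<open>y \<in> V\<close>]
      by (intro mult_left_mono) auto
    thus "f x * (M x y * f y) \<le> g x * (M x y * g y)"
      by (simp add: mult_ac)
  qed
  hence "quad_form V M g = ?l * inner_on V g g"
    using bound[of g] f(2) g by simp
  hence "mat_apply V M g x = ?l * g x" if "x \<in> V" for x
    using Rayleigh_maximizer_is_eigenvector[OF fin sym bound _ that] by blast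
  thus thesis
    using that g by (simp add: g_def)
qed

section \<open>Graphs and the signless Laplacian\<close>

lemma edge_endpoints:
  assumes "simple_graph V E" and "{x, y} \<in> E"
  shows "x \<in> V" and "y \<in> V" and "x \<noteq> y"
proof -
  obtain a b where "a \<in> V" "b \<in> V" "a \<noteq> b" "{x, y} = {a, b}"
    using assms unfolding simple_graph_def by blast
  hence "(x = a \<and> y = b) \<or> (x = b \<and> y = a)"
    by (simp add: doubleton_eq_iff)
  thus "x \<in> V" "y \<in> V" "x \<noteq> y"
    using \<open>a \<in> V\<close> \<open>b \<in> V\<close> \<open>a \<noteq> b\<close> by auto
qed

lemma finite_edges:
  assumes "simple_graph V E"
  shows "finite E"
proof -
  have "E \<subseteq> Pow V"
  proof
    fix e assume "e \<in> E"
    then obtain x y where "x \<in> V" "y \<in> V" "e = {x, y}"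
      using assms unfolding simple_graph_def by blast
    thus "e \<in> Pow V"
      by simp
  qed
  thus ?thesis
    using assms unfolding simple_graph_def by (meson finite_Pow_iff finite_subset)
qed

lemma in_nbhd_iff: "y \<in> nbhd E x \<longleftrightarrow> {x, y} \<in> E"
  unfolding nbhd_def by simp

lemma nbhd_commute: "y \<in> nbhd E x \<longleftrightarrow> x \<in> nbhd E y"
  unfolding nbhd_def by (simp add: insert_commute)

lemma nbhd_eq:
  assumes "simple_graph V E"
  shows "nbhd E x = {y \<in> V. {x, y} \<in> E}"
  unfolding nbhd_def using edge_endpoints(2)[OF assms] by auto

lemma nbhd_subset: "simple_graph V E \<Longrightarrow> nbhd E x \<subseteq> V"
  by (simp add: nbhd_eq)

lemma finite_nbhd:
  assumes "simple_graph V E"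
  shows "finite (nbhd E x)"
  using assms finite_subset[OF nbhd_subset[OF assms]] unfolding simple_graph_def by blast

lemma not_in_nbhd_self:
  assumes "simple_graph V E"
  shows "x \<notin> nbhd E x"
  using edge_endpoints(3)[OF assms, of x x] by (auto simp: in_nbhd_iff)

lemma symmetric_on_signless_laplacian: "symmetric_on V (signless_laplacian E)"
  unfolding symmetric_on_def signless_laplacian_def by (simp add: insert_commute eq_commute)

lemma signless_laplacian_nonneg: "0 \<le> signless_laplacian E x y"
  unfolding signless_laplacian_def by simp

lemma mat_apply_signless_laplacian:
  assumes sg: "simple_graph V E" and "x \<in> V"
  shows "mat_apply V (signless_laplacian E) f x = real (deg E x) * f x + (\<Sum>y\<in>nbhd E x. f y)"
proof -
  have fin: "finite V"
    using sg unfolding simple_graph_def by blast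
  have "mat_apply V (signless_laplacian E) f x
      = (\<Sum>y\<in>V. if x = y then real (deg E x) * f y else 0) + (\<Sum>y\<in>V. if {x, y} \<in> E then f y else 0)"
    unfolding mat_apply_def signless_laplacian_def sum.distrib[symmetric]
    by (intro sum.cong) (simp_all add: distrib_right)
  also have "(\<Sum>y\<in>V. if {x, y} \<in> E then f y else 0) = (\<Sum>y\<in>nbhd E x. f y)"
    unfolding nbhd_eq[OF sg] by (rule sum.inter_filter[OF fin, symmetric])
  finally show ?thesis
    using \<open>x \<in> V\<close> fin by simp
qed

lemma quad_form_signless_laplacian:
  assumes sg: "simple_graph V E"
  shows "quad_form V (signless_laplacian E) f = (\<Sum>e\<in>E. (\<Sum>x\<in>e. f x)\<^sup>2)"
proof -
  have fin: "finite V"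
    using sg unfolding simple_graph_def by blast
  define h where "h x y = (f x)\<^sup>2 + f x * f y" for x y
  define D where "D = Sigma V (nbhd E)"
  have "finite D"
    unfolding D_def using fin finite_nbhd[OF sg] by blast
  have "quad_form V (signless_laplacian E) f = (\<Sum>x\<in>V. \<Sum>y\<in>nbhd E x. h x y)"
    unfolding quad_form_def inner_on_def h_def
    by (intro sum.cong) (simp_all add: mat_apply_signless_laplacian[OF sg] deg_def
        sum.distrib sum_distrib_left distrib_left power2_eq_square)
  also have "\<dots> = (\<Sum>(x, y)\<in>D. h x y)"
    unfolding D_def using fin finite_nbhd[OF sg] by (intro sum.Sigma) auto
  also have "\<dots> = (\<Sum>e\<in>E. \<Sum>(x, y)\<in>{d \<in> D. {fst d, snd d} = e}. h x y)"
    using \<open>finite D\<close> finite_edges[OF sg]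
    by (rule sum.group[symmetric]) (auto simp: D_def in_nbhd_iff)
  also have "\<dots> = (\<Sum>e\<in>E. (\<Sum>x\<in>e. f x)\<^sup>2)"
  proof (rule sum.cong[OF refl])
    fix e assume "e \<in> E"
    then obtain a b where ab: "a \<in> V" "b \<in> V" "a \<noteq> b" "e = {a, b}"
      using sg unfolding simple_graph_def by blast
    hence "{d \<in> D. {fst d, snd d} = e} = {(a, b), (b, a)}"
      using \<open>e \<in> E\<close> by (auto simp: D_def in_nbhd_iff doubleton_eq_iff insert_commute)
    thus "(\<Sum>(x, y)\<in>{d \<in> D. {fst d, snd d} = e}. h x y) = (\<Sum>x\<in>e. f x)\<^sup>2"
      using ab by (simp add: h_def power2_eq_square algebra_simps)
  qed
  finally show ?thesis .
qed

lemma sum_nbhd_split_adjacent: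
  assumes sg: "simple_graph V E" and "u \<in> nbhd E v"
  shows "(\<Sum>y\<in>nbhd E v. f y)
    = f u + (\<Sum>y\<in>nbhd E v \<inter> nbhd E u. f y) + (\<Sum>y\<in>nbhd E v - cnbhd E u. f y)"
proof -
  define B where "B = nbhd E v \<inter> nbhd E u"
  define A where "A = nbhd E v - cnbhd E u"
  have split: "nbhd E v = insert u (B \<union> A)"
    using \<open>u \<in> nbhd E v\<close> unfolding A_def B_def cnbhd_def by auto
  have "u \<notin> B \<union> A" "B \<inter> A = {}" "finite A" "finite B"
    using not_in_nbhd_self[OF sg, of u] finite_nbhd[OF sg] unfolding A_def B_def cnbhd_def by auto
  hence "(\<Sum>y\<in>nbhd E v. f y) = f u + sum f B + sum f A"
    unfolding split by (simp add: sum.union_disjoint add.assoc)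
  thus ?thesis
    unfolding A_def B_def .
qed

lemma simple_graph_move_edge:
  assumes "simple_graph V E" and "{v, w} \<in> E" and "u \<in> V" and "u \<noteq> w"
  shows "simple_graph V ((E - {{v, w}}) \<union> {{u, w}})"
  using assms edge_endpoints(2)[OF assms(1,2)] unfolding simple_graph_def by blast

lemma quad_form_move_edge:
  assumes sg: "simple_graph V E" and vw: "{v, w} \<in> E" and uw: "{u, w} \<notin> E"
    and "u \<in> V" and "u \<noteq> w"
  shows "quad_form V (signless_laplacian ((E - {{v, w}}) \<union> {{u, w}})) f
    = quad_form V (signless_laplacian E) f - (f v + f w)\<^sup>2 + (f u + f w)\<^sup>2"
proof -
  have "v \<noteq> w"
    using edge_endpoints(3)[OF sg vw] .
  have sg': "simple_graph V ((E - {{v, w}}) \<union> {{u, w}})"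
    using simple_graph_move_edge[OF sg vw \<open>u \<in> V\<close> \<open>u \<noteq> w\<close>] .
  have "quad_form V (signless_laplacian ((E - {{v, w}}) \<union> {{u, w}})) f
      = (\<Sum>e\<in>insert {u, w} (E - {{v, w}}). (\<Sum>x\<in>e. f x)\<^sup>2)"
    unfolding quad_form_signless_laplacian[OF sg'] by simp
  also have "\<dots> = (f u + f w)\<^sup>2 + (\<Sum>e\<in>E - {{v, w}}. (\<Sum>x\<in>e. f x)\<^sup>2)"
    using finite_edges[OF sg] uw \<open>u \<noteq> w\<close> by simp
  also have "\<dots> = (f u + f w)\<^sup>2 + (\<Sum>e\<in>E. (\<Sum>x\<in>e. f x)\<^sup>2) - (f v + f w)\<^sup>2"
    using finite_edges[OF sg] vw \<open>v \<noteq> w\<close> by (simp add: sum_diff1)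
  finally show ?thesis
    unfolding quad_form_signless_laplacian[OF sg] by simp
qed

lemma nonneg_eigenvector_pos:
  assumes sg: "simple_graph V E" and con: "connected_graph V E"
    and nonneg: "\<And>z. z \<in> V \<Longrightarrow> 0 \<le> f z"
    and eig: "\<And>z. z \<in> V \<Longrightarrow> l * f z = real (deg E z) * f z + (\<Sum>y\<in>nbhd E z. f y)"
    and "a \<in> V" and "f a \<noteq> 0" and "z \<in> V"
  shows "0 < f z"
proof (rule ccontr)
  assume "\<not> 0 < f z"
  hence "f z = 0"
    using nonneg[OF \<open>z \<in> V\<close>] by simp
  have "f b = 0" if "(\<lambda>a b. {a, b} \<in> E)\<^sup>*\<^sup>* z b" for b
    using that
  proof (induction rule: rtranclp_induct)
    case base
    show ?case by fact
  next
    case (step b c)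
    have "b \<in> V"
      using edge_endpoints[OF sg step(2)] by simp
    hence "(\<Sum>y\<in>nbhd E b. f y) = 0"
      using eig[of b] step(3) by simp
    hence "\<forall>y\<in>nbhd E b. f y = 0"
      using nonneg nbhd_subset[OF sg] by (simp add: sum_nonneg_eq_0_iff[OF finite_nbhd[OF sg]] subset_iff)
    thus ?case
      using step(2) by (simp add: in_nbhd_iff)
  qed
  moreover have "(\<lambda>a b. {a, b} \<in> E)\<^sup>*\<^sup>* z a"
    using con \<open>z \<in> V\<close> \<open>a \<in> V\<close> unfolding connected_graph_def by blast
  ultimately show False
    using \<open>f a \<noteq> 0\<close> by simp
qed

section \<open>Entries of a positive eigenvector\<close>

context
  fixes V :: "'a set" and E :: "'a set set" and q :: real and x :: "'a \<Rightarrow> real"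
  assumes sg: "simple_graph V E"
    and pos: "\<And>z. z \<in> V \<Longrightarrow> 0 < x z"
    and eig: "\<And>z. z \<in> V \<Longrightarrow> q * x z = real (deg E z) * x z + (\<Sum>y\<in>nbhd E z. x y)"
begin

lemma degree_lt_eigenvalue:
  assumes "z \<in> V" and "y \<in> nbhd E z"
  shows "real (deg E z) < q"
proof -
  have "x y \<le> (\<Sum>y\<in>nbhd E z. x y)"
    using assms nbhd_subset[OF sg] pos
    by (intro member_le_sum finite_nbhd[OF sg]) (auto intro: less_imp_le)
  moreover have "0 < x y"
    using assms nbhd_subset[OF sg] pos by blast
  ultimately have "real (deg E z) * x z < q * x z"
    using eig[OF \<open>z \<in> V\<close>] by linarith
  thus ?thesis
    using pos[OF \<open>z \<in> V\<close>] by simp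
qed

lemma outer_nbhd_entry_bound:
  fixes u v z :: 'a
  defines "A \<equiv> nbhd E v - cnbhd E u"
  assumes "v \<in> V" and "card A \<le> 2"
    and outer: "\<forall>z\<in>A. nbhd E z - {v} \<subseteq> nbhd E v - nbhd E u"
    and "z \<in> A"
  shows "q * x z \<le> x z + x v + (\<Sum>y\<in>A. x y)"
proof -
  have "finite A"
    unfolding A_def using finite_nbhd[OF sg] by blast
  have "A \<subseteq> V" "v \<notin> A"
    unfolding A_def using nbhd_subset[OF sg] not_in_nbhd_self[OF sg] by blast+
  hence "z \<in> V"
    using \<open>z \<in> A\<close> by blast
  have "nbhd E z \<subseteq> insert v (A - {z})"
  proof
    fix y assume "y \<in> nbhd E z"
    moreover have "y \<noteq> u" if "y \<in> nbhd E z"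
      using that \<open>z \<in> A\<close> nbhd_commute[of u E z] unfolding A_def cnbhd_def by blast
    ultimately show "y \<in> insert v (A - {z})"
      using outer \<open>z \<in> A\<close> not_in_nbhd_self[OF sg, of z] unfolding A_def cnbhd_def by blast
  qed
  hence "deg E z \<le> card (insert v (A - {z}))"
    unfolding deg_def using \<open>finite A\<close> by (intro card_mono) auto
  also have "\<dots> = card A"
    using \<open>finite A\<close> \<open>v \<notin> A\<close> \<open>z \<in> A\<close> by (simp add: card_Suc_Diff1 del: card_Diff_insert)
  finally have "real (deg E z) * x z \<le> 2 * x z"
    using \<open>card A \<le> 2\<close> less_imp_le[OF pos[OF \<open>z \<in> V\<close>]] by (intro mult_right_mono) auto
  moreover have "(\<Sum>y\<in>nbhd E z. x y) \<le> (\<Sum>y\<in>insert v (A - {z}). x y)"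
    using \<open>nbhd E z \<subseteq> insert v (A - {z})\<close> \<open>finite A\<close> \<open>A \<subseteq> V\<close> \<open>v \<in> V\<close> pos
    by (intro sum_mono2) (auto intro: less_imp_le)
  moreover have "(\<Sum>y\<in>insert v (A - {z}). x y) = x v + (\<Sum>y\<in>A. x y) - x z"
    using \<open>finite A\<close> \<open>v \<notin> A\<close> \<open>z \<in> A\<close> by (simp add: sum_diff1)
  ultimately show ?thesis
    using eig[OF \<open>z \<in> V\<close>] by linarith
qed

lemma sum_outer_nbhd_lt:
  fixes u v :: 'a
  defines "A \<equiv> nbhd E v - cnbhd E u"
  assumes "v \<in> V" and "card A \<le> 2"
    and outer: "\<forall>z\<in>A. nbhd E z - {v} \<subseteq> nbhd E v - nbhd E u"
    and "4 < q"
  shows "(\<Sum>y\<in>A. x y) < 2 * x v"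
proof -
  define S where "S = (\<Sum>y\<in>A. x y)"
  have "A \<subseteq> V"
    unfolding A_def using nbhd_subset[OF sg] by blast
  hence "0 \<le> S"
    unfolding S_def using pos by (intro sum_nonneg) (auto intro: less_imp_le)
  have "q * S \<le> (\<Sum>z\<in>A. x z + x v + S)"
    unfolding S_def sum_distrib_left
    using outer_nbhd_entry_bound[OF \<open>v \<in> V\<close>] \<open>card A \<le> 2\<close> outer
    unfolding A_def by (intro sum_mono) blast
  also have "\<dots> = S + real (card A) * (x v + S)"
    unfolding S_def sum.distrib by (simp add: algebra_simps)
  also have "\<dots> \<le> S + 2 * (x v + S)"
    using \<open>card A \<le> 2\<close> \<open>0 \<le> S\<close> pos[OF \<open>v \<in> V\<close>] by (intro add_left_mono mult_right_mono) auto
  finally have "(q - 3) * S \<le> 2 * x v"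
    by (simp add: algebra_simps)
  moreover have "S < (q - 3) * S \<or> S = 0"
    using \<open>0 \<le> S\<close> \<open>4 < q\<close> mult_strict_right_mono[of 1 "q - 3" S] by auto
  ultimately show ?thesis
    using pos[OF \<open>v \<in> V\<close>] unfolding S_def by linarith
qed

lemma eigenvector_entry_lt:
  fixes u v w :: 'a
  defines "A \<equiv> nbhd E v - cnbhd E u"
  assumes "u \<in> V" and "v \<in> nbhd E u" and deg_uv: "deg E v + 2 \<le> deg E u"
    and "w \<in> A" and "card A \<le> 2"
    and outer: "\<forall>z\<in>A. nbhd E z - {v} \<subseteq> nbhd E v - nbhd E u"
  shows "x v < x u"
proof -
  define S where "S = (\<Sum>y\<in>A. x y)"
  define T where "T = (\<Sum>y\<in>nbhd E v \<inter> nbhd E u. x y)"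
  have "v \<in> V"
    using \<open>v \<in> nbhd E u\<close> nbhd_subset[OF sg] by blast
  have "u \<in> nbhd E v"
    using \<open>v \<in> nbhd E u\<close> nbhd_commute[of v E u] by simp
  have "{u, w} \<subseteq> nbhd E v" "u \<noteq> w"
    using \<open>u \<in> nbhd E v\<close> \<open>w \<in> A\<close> unfolding A_def cnbhd_def by auto
  hence "card {u, w} \<le> deg E v"
    unfolding deg_def by (intro card_mono[OF finite_nbhd[OF sg]])
  hence "4 < q"
    using \<open>u \<noteq> w\<close> deg_uv degree_lt_eigenvalue[OF \<open>u \<in> V\<close> \<open>v \<in> nbhd E u\<close>] by simp
  have sum_v: "(\<Sum>y\<in>nbhd E v. x y) = x u + T + S"
    unfolding S_def T_def A_def by (rule sum_nbhd_split_adjacent[OF sg \<open>u \<in> nbhd E v\<close>])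
  have "x v + T = (\<Sum>y\<in>insert v (nbhd E v \<inter> nbhd E u). x y)"
    unfolding T_def using finite_nbhd[OF sg] not_in_nbhd_self[OF sg, of v] by simp
  also have "\<dots> \<le> (\<Sum>y\<in>nbhd E u. x y)"
    using \<open>v \<in> nbhd E u\<close> finite_nbhd[OF sg] nbhd_subset[OF sg, of u] pos
    by (intro sum_mono2) (auto intro: less_imp_le)
  finally have sum_u: "x v + T \<le> (\<Sum>y\<in>nbhd E u. x y)" .
  have "S < 2 * x v"
    using sum_outer_nbhd_lt[OF \<open>v \<in> V\<close>] \<open>card A \<le> 2\<close> outer \<open>4 < q\<close>
    unfolding S_def A_def by blast
  moreover have "(real (deg E v) + 2) * x v \<le> real (deg E u) * x v"
    using deg_uv pos[OF \<open>v \<in> V\<close>] by (intro mult_right_mono) auto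
  ultimately have "q * x v - real (deg E u) * x v + x v < q * x u - real (deg E u) * x u + x u"
    using eig[OF \<open>u \<in> V\<close>] eig[OF \<open>v \<in> V\<close>] sum_u sum_v unfolding distrib_right by linarith
  hence "(q - real (deg E u) + 1) * x v < (q - real (deg E u) + 1) * x u"
    by (simp add: algebra_simps)
  moreover have "0 < q - real (deg E u) + 1"
    using degree_lt_eigenvalue[OF \<open>u \<in> V\<close> \<open>v \<in> nbhd E u\<close>] by simp
  ultimately show ?thesis
    by simp
qed

end

lemma quad_form_le_q_index:
  assumes "simple_graph V E" and "V \<noteq> {}"
  shows "quad_form V (signless_laplacian E) f \<le> q_index V E * inner_on V f f"
proof -
  have "finite V"
    using assms(1) unfolding simple_graph_def by blast
  thus ?thesis
    using Rayleigh_principle[OF _ assms(2) symmetric_on_signless_laplacian] unfolding q_index_def by metis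
qed

lemma q_index_Perron_vector:
  assumes sg: "simple_graph V E" and con: "connected_graph V E"
  obtains x where "inner_on V x x = 1" and "quad_form V (signless_laplacian E) x = q_index V E"
    and "\<And>z. z \<in> V \<Longrightarrow> 0 < x z"
    and "\<And>z. z \<in> V \<Longrightarrow> q_index V E * x z = real (deg E z) * x z + (\<Sum>y\<in>nbhd E z. x y)"
proof -
  have fin: "finite V" and "V \<noteq> {}"
    using sg con unfolding simple_graph_def connected_graph_def by blast+
  then obtain x where x: "inner_on V x x = 1" "\<And>z. z \<in> V \<Longrightarrow> 0 \<le> x z"
    and eigen: "\<And>z. z \<in> V \<Longrightarrow> mat_apply V (signless_laplacian E) x z = q_index V E * x z"
    using Perron_eigenvector[OF fin _ symmetric_on_signless_laplacian signless_laplacian_nonneg]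
    unfolding q_index_def by blast
  have eig: "q_index V E * x z = real (deg E z) * x z + (\<Sum>y\<in>nbhd E z. x y)" if "z \<in> V" for z
    using eigen[OF that] mat_apply_signless_laplacian[OF sg that] by simp
  obtain a where "a \<in> V" "x a \<noteq> 0"
    using x(1) inner_on_self_pos_iff[OF fin, of x] by auto
  hence pos: "0 < x z" if "z \<in> V" for z
    using nonneg_eigenvector_pos[OF sg con x(2) eig _ _ that] by blast
  have "quad_form V (signless_laplacian E) x = inner_on V x (\<lambda>z. q_index V E * x z)"
    unfolding quad_form_def using eigen by (intro inner_on_cong) simp
  hence "quad_form V (signless_laplacian E) x = q_index V E"
    using x(1) by (simp add: inner_on_scale_right)
  thus thesis
    using that x(1) pos eig by blast
qed

theorem lemma2p6:
  fixes V :: "'a set" and E :: "'a set set" and u v w :: 'a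
  assumes "simple_graph V E"
    and "connected_graph V E"
    and "u \<in> V"
    and "v \<in> nbhd E u"
    and "deg E v + 2 \<le> deg E u"
    and "w \<in> V - cnbhd E u"
    and "w \<in> nbhd E v"
    and "card (nbhd E v - cnbhd E u) \<in> {1, 2}"
    and "\<forall>z \<in> nbhd E v - cnbhd E u. nbhd E z - {v} \<subseteq> nbhd E v - nbhd E u"
  shows "q_index V ((E - {{v, w}}) \<union> {{u, w}}) > q_index V E"
proof -
  have vw: "{v, w} \<in> E" and uw: "{u, w} \<notin> E" "u \<noteq> w"
    using assms(6,7) by (auto simp: cnbhd_def in_nbhd_iff)
  obtain x where x: "inner_on V x x = 1" "quad_form V (signless_laplacian E) x = q_index V E"
    and pos: "\<And>z. z \<in> V \<Longrightarrow> 0 < x z"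
    and eig: "\<And>z. z \<in> V \<Longrightarrow> q_index V E * x z = real (deg E z) * x z + (\<Sum>y\<in>nbhd E z. x y)"
    using q_index_Perron_vector[OF assms(1,2)] by blast
  have "x v < x u"
    using eigenvector_entry_lt[OF assms(1) pos eig assms(3-5)] assms(6-9) by auto
  moreover have "0 < x v" "0 < x w"
    using pos assms(4,6) nbhd_subset[OF assms(1), of u] by blast+
  ultimately have "(x v + x w)\<^sup>2 < (x u + x w)\<^sup>2"
    by (intro power_strict_mono) auto
  hence "q_index V E < quad_form V (signless_laplacian ((E - {{v, w}}) \<union> {{u, w}})) x"
    using quad_form_move_edge[OF assms(1) vw uw(1) assms(3) uw(2)] x(2) by simp
  also have "\<dots> \<le> q_index V ((E - {{v, w}}) \<union> {{u, w}})"
    using quad_form_le_q_index[OF simple_graph_move_edge[OF assms(1) vw assms(3) uw(2)], of x]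
      assms(3) x(1) by auto
  finally show ?thesis .
qed

end
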